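(* Let $\mathcal D$ be a fixed strict fundamental domain for the action of $R_\omega$ by translations on $K_\omega$. There exists a bijection from $R^{2,\sharp}_{\omega,\rm prim}$ to $\Gamma^\sharp\cap(P^-U^+_{\mathcal D})$ of the form $v\mapsto\gamma_v=\begin{pmatrix}v&w_v\end{pmatrix}$ (the matrix with first column $v$ and second column some $w_v\in R_\omega^2$) such that for every $n\in\mathbb Z$, for all measurable subsets $\Theta$ of $\mathbb S^1_\omega$ and $\mathcal D'$ of $\mathcal D$, and for every nonzero ideal $I$ of $R_\omega$, the following are equivalent: (1) $\|v\|_\omega=q_\omega^n$, $y_v\in I$, $\overline v\in\Theta$ and $x_{w_v}/x_v\in\mathcal D'$; (2) $\gamma_v\in\Gamma_0[I]$ and $\gamma_v\in P^-_\Theta A_nU^+_{\mathcal D'}$.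
   Context: $K$ is a global function field over a finite field $\mathbb{F}_q$ (function field of a geometrically connected smooth projective curve $\mathbf C$ over $\mathbb F_q$), $\omega$ a normalized discrete valuation of $K$, $K_\omega$ the completion, $\mathcal O_\omega$ its valuation ring, $\pi_\omega$ a fixed uniformizer, $q_\omega$ the order of the residue field, $|x|_\omega=q_\omega^{-\omega(x)}$, and $R_\omega$ the ring of elements of $K$ whose only poles are at $\omega$. Elements of $K_\omega^2$ are written $v=(x_v,y_v)$ and identified with column vectors; $\|v\|_\omega=\max\{|x_v|_\omega,|y_v|_\omega\}$, $\overline v=\pi_\omega^{\log_{q_\omega}\|v\|_\omega}v$, $\mathbb S^1_\omega=\{v:\|v\|_\omega=1\}$. $R^2_{\omega,\rm prim}=\{(a,b)\in R_\omega^2:aR_\omega+bR_\omega=R_\omega\}$ and $R^{2,\sharp}_{\omega,\rm prim}=\{(a,b)\in R^2_{\omega,\rm prim}:|a|_\omega\ge|b|_\omega\}$. $G=\mathrm{SL}_2(K_\omega)$, $\Gamma=\mathrm{SL}_2(R_\omega)$, $\Gamma^\sharp=\{\begin{pmatrix}\alpha&\gamma\\ \beta&\delta\end{pmatrix}\in\Gamma:|\alpha|_\omega\ge|\beta|_\omega\}$, $\Gamma_0[I]=\{\begin{pmatrix}a&c\\ b&d\end{pmatrix}\in\Gamma:b\in I\}$. $P^-$ is the lower triangular subgroup of $G$, $P^-(\mathcal O_\omega)=P^-\cap\mathcal M_2(\mathcal O_\omega)$, $U^+$ the upper unipotent subgroup. For $\Theta\subset\mathbb S^1_\omega$, $P^-_\Theta$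 is the set of elements of $P^-(\mathcal O_\omega)$ whose first column lies in $\Theta$; $A_n=\{\mathrm{diag}(\pi_\omega^{-n},\pi_\omega^n)\}$; for $\mathcal D'\subset K_\omega$, $U^+_{\mathcal D'}=\{\begin{pmatrix}1&\gamma\\0&1\end{pmatrix}:\gamma\in\mathcal D'\}$. *)

theory Defs
  imports "HOL-Analysis.Analysis" "HOL-Computational_Algebra.Polynomial"
begin

definition subfield :: "'a::field set \<Rightarrow> bool" where
  "subfield S \<longleftrightarrow> 0 \<in> S \<and> 1 \<in> S \<and> (\<forall>x\<in>S. \<forall>y\<in>S. x + y \<in> S \<and> x * y \<in> S)
     \<and> (\<forall>x\<in>S. - x \<in> S \<and> inverse x \<in> S)"

text \<open>A normalized discrete valuation on a subfield S (value group exactly the integers);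
  the value at 0 (formally +infinity) is irrelevant and never used.\<close>
definition norm_dvaluation :: "'a::field set \<Rightarrow> ('a \<Rightarrow> int) \<Rightarrow> bool" where
  "norm_dvaluation S v \<longleftrightarrow>
     (\<forall>x\<in>S - {0}. \<forall>y\<in>S - {0}. v (x * y) = v x + v y \<and>
                               (x + y \<noteq> 0 \<longrightarrow> min (v x) (v y) \<le> v (x + y)))
     \<and> v ` (S - {0}) = UNIV"

definition poly_over :: "'a::comm_ring_1 set \<Rightarrow> 'a poly \<Rightarrow> bool" where
  "poly_over F p \<longleftrightarrow> (\<forall>i. coeff p i \<in> F)"

definition algebraic_over :: "'a::field set \<Rightarrow> 'a \<Rightarrow> bool" where
  "algebraic_over F x \<longleftrightarrow> (\<exists>p. p \<noteq> 0 \<and> poly_over F p \<and> poly p x = 0)"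

definition rat_fun_field :: "'a::field set \<Rightarrow> 'a \<Rightarrow> 'a set" where
  "rat_fun_field F t = {poly p t / poly r t | p r. poly_over F p \<and> poly_over F r \<and> poly r t \<noteq> 0}"

definition finite_ext :: "'a::field set \<Rightarrow> 'a set \<Rightarrow> bool" where
  "finite_ext L K \<longleftrightarrow> (\<exists>B. finite B \<and> B \<subseteq> K \<and>
      (\<forall>x\<in>K. \<exists>c. (\<forall>b\<in>B. c b \<in> L) \<and> x = (\<Sum>b\<in>B. c b * b)))"

text \<open>K is a global function field with (full) field of constants the finite field F:
  K is finitely generated of transcendence degree 1 over F and F is algebraically closed
  in K (equivalently, K is the function field of a geometrically connected smooth projective
  curve over F).\<close>
definition global_function_field :: "'a::field set \<Rightarrow> 'a set \<Rightarrow> bool" where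
  "global_function_field F K \<longleftrightarrow> subfield F \<and> finite F \<and> subfield K \<and> F \<subseteq> K \<and>
     (\<exists>t\<in>K. \<not> algebraic_over F t \<and> finite_ext (rat_fun_field F t) K) \<and>
     (\<forall>x\<in>K. algebraic_over F x \<longrightarrow> x \<in> F)"

definition place :: "'a::field set \<Rightarrow> 'a set \<Rightarrow> ('a \<Rightarrow> int) \<Rightarrow> bool" where
  "place F K v \<longleftrightarrow> norm_dvaluation K v \<and> (\<forall>x\<in>F - {0}. v x = 0)"

text \<open>R_omega: elements of K whose only poles are at omega.\<close>
definition R_omega :: "'a::field set \<Rightarrow> 'a set \<Rightarrow> ('a \<Rightarrow> int) \<Rightarrow> 'a set" where
  "R_omega F K w = {x\<in>K. \<forall>v. place F K v \<and> (\<exists>y\<in>K - {0}. v y \<noteq> w y) \<longrightarrow> x = 0 \<or> 0 \<le> v x}"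

definition val_converges :: "('a::field \<Rightarrow> int) \<Rightarrow> (nat \<Rightarrow> 'a) \<Rightarrow> 'a \<Rightarrow> bool" where
  "val_converges v x l \<longleftrightarrow> (\<forall>N. \<exists>M. \<forall>n\<ge>M. x n = l \<or> N \<le> v (x n - l))"

definition val_cauchy :: "('a::field \<Rightarrow> int) \<Rightarrow> (nat \<Rightarrow> 'a) \<Rightarrow> bool" where
  "val_cauchy v x \<longleftrightarrow> (\<forall>N. \<exists>M. \<forall>m\<ge>M. \<forall>n\<ge>M. x m = x n \<or> N \<le> v (x m - x n))"

text \<open>The whole ambient type is the completion of K with respect to v: v is a normalized
  discrete valuation on it (restricting to one on K), it is complete, and K is dense.\<close>
definition is_completion :: "'a::field set \<Rightarrow> ('a \<Rightarrow> int) \<Rightarrow> bool" where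
  "is_completion K v \<longleftrightarrow> norm_dvaluation UNIV v \<and> norm_dvaluation K v \<and>
     (\<forall>x. val_cauchy v x \<longrightarrow> (\<exists>l. val_converges v x l)) \<and>
     (\<forall>y. \<exists>x. (\<forall>n. x n \<in> K) \<and> val_converges v x y)"

definition valring :: "('a::field \<Rightarrow> int) \<Rightarrow> 'a set" where
  "valring v = {x. x = 0 \<or> 0 \<le> v x}"

definition maxideal :: "('a::field \<Rightarrow> int) \<Rightarrow> 'a set" where
  "maxideal v = {x. x = 0 \<or> 1 \<le> v x}"

definition residue_field :: "('a::field \<Rightarrow> int) \<Rightarrow> 'a set set" where
  "residue_field v = valring v // {(x, y). x \<in> valring v \<and> y \<in> valring v \<and> x - y \<in> maxideal v}"

definition qw :: "('a::field \<Rightarrow> int) \<Rightarrow> nat" where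
  "qw v = card (residue_field v)"

definition absw :: "('a::field \<Rightarrow> int) \<Rightarrow> 'a \<Rightarrow> real" where
  "absw v x = (if x = 0 then 0 else real (qw v) powi (- v x))"

definition normw :: "('a::field \<Rightarrow> int) \<Rightarrow> 'a^2 \<Rightarrow> real" where
  "normw v u = max (absw v (u$1)) (absw v (u$2))"

definition sphere1 :: "('a::field \<Rightarrow> int) \<Rightarrow> ('a^2) set" where
  "sphere1 v = {u. normw v u = 1}"

text \<open>overline u = unif^(log_q ||u||) u  (the exponent is an integer for u nonzero).\<close>
definition vbar :: "('a::field \<Rightarrow> int) \<Rightarrow> 'a \<Rightarrow> 'a^2 \<Rightarrow> 'a^2" where
  "vbar v unif u = (unif powi \<lfloor>log (real (qw v)) (normw v u)\<rfloor>) *s u"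

definition mat2 :: "'a::zero \<Rightarrow> 'a \<Rightarrow> 'a \<Rightarrow> 'a \<Rightarrow> 'a^2^2" where
  "mat2 a b c d = (\<chi> i j. if i = 1 then (if j = 1 then a else b) else (if j = 1 then c else d))"

definition setmult :: "('a::semiring_1^2^2) set \<Rightarrow> ('a^2^2) set \<Rightarrow> ('a^2^2) set" where
  "setmult A B = {a ** b | a b. a \<in> A \<and> b \<in> B}"

definition Rprim :: "'a::field set \<Rightarrow> ('a^2) set" where
  "Rprim R = {u. u$1 \<in> R \<and> u$2 \<in> R \<and> {u$1 * x + u$2 * y | x y. x \<in> R \<and> y \<in> R} = R}"

definition Rprim_sharp :: "('a::field \<Rightarrow> int) \<Rightarrow> 'a set \<Rightarrow> ('a^2) set" where
  "Rprim_sharp v R = {u \<in> Rprim R. absw v (u$2) \<le> absw v (u$1)}"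

definition SL2_over :: "'a::field set \<Rightarrow> ('a^2^2) set" where
  "SL2_over R = {M. (\<forall>i j. M$i$j \<in> R) \<and> det M = 1}"

definition Gamma_sharp :: "('a::field \<Rightarrow> int) \<Rightarrow> 'a set \<Rightarrow> ('a^2^2) set" where
  "Gamma_sharp v R = {M \<in> SL2_over R. absw v (M$2$1) \<le> absw v (M$1$1)}"

definition Gamma0 :: "'a::field set \<Rightarrow> 'a set \<Rightarrow> ('a^2^2) set" where
  "Gamma0 R I = {M \<in> SL2_over R. M$2$1 \<in> I}"

definition Pminus :: "('a::field^2^2) set" where
  "Pminus = {M. det M = 1 \<and> M$1$2 = 0}"

definition Pminus_Theta :: "('a::field \<Rightarrow> int) \<Rightarrow> ('a^2) set \<Rightarrow> ('a^2^2) set" where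
  "Pminus_Theta v \<Theta> = {M \<in> Pminus. (\<forall>i j. M$i$j \<in> valring v) \<and> column 1 M \<in> \<Theta>}"

definition A_mat :: "'a::field \<Rightarrow> int \<Rightarrow> 'a^2^2" where
  "A_mat unif n = mat2 (unif powi (- n)) 0 0 (unif powi n)"

definition Uplus :: "'a::field set \<Rightarrow> ('a^2^2) set" where
  "Uplus D' = {mat2 1 g 0 1 | g. g \<in> D'}"

definition nonzero_ideal :: "'a::field set \<Rightarrow> 'a set \<Rightarrow> bool" where
  "nonzero_ideal R I \<longleftrightarrow> I \<subseteq> R \<and> 0 \<in> I \<and> (\<forall>x\<in>I. \<forall>y\<in>I. x + y \<in> I)
     \<and> (\<forall>r\<in>R. \<forall>x\<in>I. r * x \<in> I) \<and> I \<noteq> {0}"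

definition strict_fund_dom :: "'a::field set \<Rightarrow> 'a set \<Rightarrow> bool" where
  "strict_fund_dom R D \<longleftrightarrow> (\<forall>x. \<exists>!r. r \<in> R \<and> x + r \<in> D)"

end

theory Submission
  imports Defs
begin

text \<open>Taking the first column is a bijection from \<open>\<Gamma>\<^sup>\<sharp> \<inter> P\<^sup>- U\<^sup>+\<^sub>D\<close> onto the primitive
  vectors \<open>v\<close> with \<open>|y\<^sub>v| \<le> |x\<^sub>v|\<close>: a Bezout relation completes \<open>v\<close> to a matrix in
  \<open>SL\<^sub>2(R\<^sub>\<omega>)\<close>, two completions differ by a right factor \<open>(1 t; 0 1)\<close> with \<open>t \<in> R\<^sub>\<omega>\<close>,
  which translates \<open>x\<^sub>w/x\<^sub>v\<close> by \<open>t\<close>, and exactly one translate lies in \<open>D\<close>.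
  For \<open>\<gamma> = (v w)\<close> with \<open>x\<^sub>v \<noteq> 0\<close> the factorisation \<open>\<gamma> = p a\<^sub>n u\<close> with \<open>p\<close> lower triangular
  is explicit: \<open>u\<close> has upper entry \<open>x\<^sub>w/x\<^sub>v\<close> and \<open>p\<close> has first column \<open>\<pi>\<^sup>n v\<close>. Since
  \<open>|y\<^sub>v| \<le> |x\<^sub>v|\<close>, this \<open>p\<close> is integral with unit diagonal exactly when \<open>\<parallel>v\<parallel> = |x\<^sub>v| = q\<^sup>n\<close>,
  and then \<open>\<pi>\<^sup>n v = vbar v\<close>.\<close>

section \<open>Discrete valuations and absolute values\<close>

lemma norm_dvaluation_mult:
  "norm_dvaluation S v \<Longrightarrow> x \<in> S \<Longrightarrow> y \<in> S \<Longrightarrow> x \<noteq> 0 \<Longrightarrow> y \<noteq> 0 \<Longrightarrow> v (x * y) = v x + v y"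
  unfolding norm_dvaluation_def by blast

lemma norm_dvaluation_add:
  "norm_dvaluation S v \<Longrightarrow> x \<in> S \<Longrightarrow> y \<in> S \<Longrightarrow> x \<noteq> 0 \<Longrightarrow> y \<noteq> 0 \<Longrightarrow> x + y \<noteq> 0
    \<Longrightarrow> min (v x) (v y) \<le> v (x + y)"
  unfolding norm_dvaluation_def by blast

lemma norm_dvaluation_one: "norm_dvaluation S v \<Longrightarrow> 1 \<in> S \<Longrightarrow> v 1 = 0"
  using norm_dvaluation_mult[of S v 1 1] by simp

lemma norm_dvaluation_uminus:
  assumes v: "norm_dvaluation S v" and S: "1 \<in> S" "-1 \<in> S" and x: "x \<in> S" "x \<noteq> 0"
  shows "v (- x) = v x"
proof -
  have "v (-1) = 0"
    using norm_dvaluation_mult[OF v S(2) S(2)] norm_dvaluation_one[OF v S(1)] by simp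
  then show ?thesis
    using norm_dvaluation_mult[OF v S(2) x(1)] x(2) by simp
qed

lemma norm_dvaluation_inverse: "norm_dvaluation UNIV v \<Longrightarrow> x \<noteq> 0 \<Longrightarrow> v (inverse x) = - v x"
  using norm_dvaluation_mult[of UNIV v x "inverse x"] norm_dvaluation_one[of UNIV v] by simp

lemma norm_dvaluation_power:
  "norm_dvaluation UNIV v \<Longrightarrow> x \<noteq> 0 \<Longrightarrow> v (x ^ k) = int k * v x"
  by (induction k) (auto simp: norm_dvaluation_one norm_dvaluation_mult algebra_simps)

lemma norm_dvaluation_power_int:
  assumes v: "norm_dvaluation UNIV v" and x: "x \<noteq> 0"
  shows "v (x powi k) = k * v x"
proof (cases "k \<ge> 0")
  case True
  then show ?thesis
    using norm_dvaluation_power[OF v x, of "nat k"] by (simp add: power_int_def)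
next
  case False
  then have "x powi k = inverse (x ^ nat (- k))"
    by (simp add: power_int_def power_inverse)
  then show ?thesis
    using False v x by (simp add: norm_dvaluation_inverse norm_dvaluation_power)
qed

text \<open>The hypothesis \<open>v t = 1\<close> does not exclude \<open>t = 0\<close>, since a valuation is unconstrained
  at \<open>0\<close>; hence the hypothesis \<open>t powi n \<noteq> 0\<close> here and in the factorisation lemmas below.\<close>

lemma norm_dvaluation_uniformizer_power_int:
  assumes v: "norm_dvaluation UNIV v" and "v t = 1" and "t powi n \<noteq> 0"
  shows "v (t powi n) = n"
proof (cases "n = 0")
  case True
  then show ?thesis using norm_dvaluation_one[OF v] by simp
next
  case False
  then have "t \<noteq> 0" using assms(3) by auto
  then show ?thesis using norm_dvaluation_power_int[OF v] assms(2) by simp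
qed

lemma qw_ge_2:
  assumes w: "norm_dvaluation UNIV w" and fin: "finite (residue_field w)"
  shows "qw w \<ge> 2"
proof -
  let ?r = "{(x, y). x \<in> valring w \<and> y \<in> valring w \<and> x - y \<in> maxideal w}"
  have w1: "w 1 = 0" using norm_dvaluation_one[OF w] by simp
  have classes: "?r `` {0} \<in> residue_field w" "?r `` {1} \<in> residue_field w"
    unfolding residue_field_def by (rule quotientI, simp add: valring_def w1)+
  have "0 \<in> ?r `` {0}" "0 \<notin> ?r `` {1}"
    by (auto simp: valring_def maxideal_def w1)
  then have "?r `` {0} \<noteq> ?r `` {1}" by blast
  then have "card {?r `` {0}, ?r `` {1}} = 2" by simp
  moreover have "card {?r `` {0}, ?r `` {1}} \<le> card (residue_field w)"
    using classes fin by (intro card_mono) auto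
  ultimately show ?thesis unfolding qw_def by simp
qed

lemma log_power_int: "(q::real) > 1 \<Longrightarrow> log q (q powi k) = of_int k"
  by (simp add: powr_real_of_int'[symmetric])

lemma power_int_le_power_int_iff:
  assumes "(q::real) > 1" shows "q powi a \<le> q powi b \<longleftrightarrow> a \<le> b"
proof
  assume "q powi a \<le> q powi b"
  then have "log q (q powi a) \<le> log q (q powi b)"
    using assms by (subst log_le_cancel_iff) auto
  then show "a \<le> b" using assms by (simp add: log_power_int)
qed (use assms in \<open>simp add: power_int_increasing\<close>)

lemma power_int_eq_power_int_iff: "(q::real) > 1 \<Longrightarrow> q powi a = q powi b \<longleftrightarrow> a = b"
  by (metis order_antisym order_refl power_int_le_power_int_iff)

lemma valuation_le_if_absw_le:
  assumes "qw w \<ge> 2" "absw w y \<le> absw w x" "x \<noteq> 0"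
  shows "y = 0 \<or> w x \<le> w y"
proof (cases "y = 0")
  case False
  then have "real (qw w) powi (- w y) \<le> real (qw w) powi (- w x)"
    using assms by (simp add: absw_def)
  then show ?thesis
    using power_int_le_power_int_iff[of "real (qw w)"] assms(1) by simp
qed simp

lemma normw_eq_if_absw_le:
  "absw w (u$2) \<le> absw w (u$1) \<Longrightarrow> u$1 \<noteq> 0 \<Longrightarrow> normw w u = real (qw w) powi (- w (u$1))"
  by (simp add: normw_def absw_def)

lemma vbar_eq_if_absw_le:
  assumes "qw w \<ge> 2" "absw w (u$2) \<le> absw w (u$1)" "u$1 \<noteq> 0"
  shows "vbar w t u = t powi (- w (u$1)) *s u"
  using assms by (simp add: vbar_def normw_eq_if_absw_le log_power_int)

section \<open>The ring \<open>R\<^sub>\<omega>\<close>\<close>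

locale subring =
  fixes R :: "'a::comm_ring_1 set"
  assumes zero_mem [simp]: "0 \<in> R" and one_mem [simp]: "1 \<in> R"
    and add_mem: "x \<in> R \<Longrightarrow> y \<in> R \<Longrightarrow> x + y \<in> R"
    and mult_mem: "x \<in> R \<Longrightarrow> y \<in> R \<Longrightarrow> x * y \<in> R"
    and uminus_mem: "x \<in> R \<Longrightarrow> - x \<in> R"
begin

lemma diff_mem: "x \<in> R \<Longrightarrow> y \<in> R \<Longrightarrow> x - y \<in> R"
  using add_mem uminus_mem by (metis diff_conv_add_uminus)

end

lemma subring_subfield: "subfield K \<Longrightarrow> subring K"
  unfolding subfield_def by unfold_locales auto

lemma subring_Int_valring:
  assumes K: "subring K" and v: "norm_dvaluation K v"
  shows "subring (K \<inter> valring v)"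
proof
  fix x y assume x: "x \<in> K \<inter> valring v" and y: "y \<in> K \<inter> valring v"
  show "x + y \<in> K \<inter> valring v"
  proof (cases "x = 0 \<or> y = 0 \<or> x + y = 0")
    case False
    then show ?thesis
      using x y norm_dvaluation_add[OF v, of x y] subring.add_mem[OF K]
      by (auto simp: valring_def)
  qed (use x y subring.add_mem[OF K] in \<open>auto simp: valring_def\<close>)
  show "x * y \<in> K \<inter> valring v"
  proof (cases "x = 0 \<or> y = 0")
    case False
    then show ?thesis
      using x y norm_dvaluation_mult[OF v, of x y] subring.mult_mem[OF K]
      by (auto simp: valring_def)
  qed (use x y subring.mult_mem[OF K] in \<open>auto simp: valring_def\<close>)
next
  fix x assume "x \<in> K \<inter> valring v"
  then show "- x \<in> K \<inter> valring v"
    using norm_dvaluation_uminus[OF v, of x] subring.uminus_mem[OF K]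
    by (cases "x = 0") (auto simp: valring_def subring.one_mem[OF K])
qed (use norm_dvaluation_one[OF v] subring.one_mem[OF K] subring.zero_mem[OF K]
      in \<open>auto simp: valring_def\<close>)

lemma subring_Int_INT:
  assumes K: "subring K" and S: "\<And>i. i \<in> I \<Longrightarrow> subring (K \<inter> S i)"
  shows "subring (K \<inter> (\<Inter>i\<in>I. S i))"
proof
  fix x y assume "x \<in> K \<inter> (\<Inter>i\<in>I. S i)" "y \<in> K \<inter> (\<Inter>i\<in>I. S i)"
  then show "x + y \<in> K \<inter> (\<Inter>i\<in>I. S i)" "x * y \<in> K \<inter> (\<Inter>i\<in>I. S i)"
    using subring.add_mem[OF S] subring.mult_mem[OF S] subring.add_mem[OF K] subring.mult_mem[OF K]
    by auto
next
  fix x assume "x \<in> K \<inter> (\<Inter>i\<in>I. S i)"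
  then show "- x \<in> K \<inter> (\<Inter>i\<in>I. S i)"
    using subring.uminus_mem[OF S] subring.uminus_mem[OF K] by auto
qed (use subring.zero_mem[OF S] subring.one_mem[OF S] subring.zero_mem[OF K] subring.one_mem[OF K]
      in auto)

lemma R_omega_eq_Int_valring:
  "R_omega F K w = K \<inter> (\<Inter>v\<in>{v. place F K v \<and> (\<exists>y\<in>K - {0}. v y \<noteq> w y)}. valring v)"
  by (auto simp: R_omega_def valring_def)

lemma subring_R_omega: "subfield K \<Longrightarrow> subring (R_omega F K w)"
  unfolding R_omega_eq_Int_valring
  by (intro subring_Int_INT subring_Int_valring subring_subfield) (auto simp: place_def)

section \<open>Factorisations in \<open>SL\<^sub>2\<close>\<close>

lemma mat2_nth [simp]:
  "mat2 a b c d $ 1 $ 1 = a" "mat2 a b c d $ 1 $ 2 = b"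
  "mat2 a b c d $ 2 $ 1 = c" "mat2 a b c d $ 2 $ 2 = d"
  by (simp_all add: mat2_def)

lemma mat2_entries: "(M::'a::zero^2^2) = mat2 (M$1$1) (M$1$2) (M$2$1) (M$2$2)"
  by (simp add: vec_eq_iff forall_2)

lemma mat2_eq_iff: "mat2 a b c d = mat2 a' b' c' d' \<longleftrightarrow> a = a' \<and> b = b' \<and> c = c' \<and> d = d'"
  by (metis mat2_nth)

lemma mat2_mult:
  "mat2 a b c d ** mat2 a' b' c' d' =
     (mat2 (a*a' + b*c') (a*b' + b*d') (c*a' + d*c') (c*b' + d*d') :: 'a::semiring_1^2^2)"
  by (simp add: vec_eq_iff forall_2 matrix_matrix_mult_def sum_2)

lemma det_mat2: "det (mat2 a b c d :: 'a::comm_ring_1^2^2) = a*d - b*c"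
  by (simp add: det_2)

lemma mat2_identity: "mat2 1 0 0 1 = (mat 1 :: 'a::semiring_1^2^2)"
  by (simp add: vec_eq_iff forall_2 mat_def)

lemma column_nth: "column j M $ i = M $ i $ j"
  by (simp add: column_def)

lemma A_mat_eq: "A_mat t n = mat2 (inverse (t powi n)) 0 0 (t powi n)"
  by (simp add: A_mat_def power_int_minus)

lemma lower_A_mat_upper_unipotent:
  "mat2 a 0 c d ** A_mat t n ** mat2 1 g 0 1 =
    mat2 (a * inverse (t powi n)) (a * inverse (t powi n) * g)
      (c * inverse (t powi n)) (c * inverse (t powi n) * g + d * t powi n)"
  by (simp add: A_mat_eq mat2_mult)

lemma mem_setmult_A_mat_Uplus_iff:
  fixes M :: "'a::field^2^2"
  assumes S: "S \<subseteq> Pminus" and det: "det M = 1"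
  shows "M \<in> setmult (setmult S {A_mat t n}) (Uplus E) \<longleftrightarrow>
     t powi n \<noteq> 0 \<and> M$1$1 \<noteq> 0 \<and> M$1$2 / M$1$1 \<in> E \<and>
     mat2 (M$1$1 * t powi n) 0 (M$2$1 * t powi n) (inverse (M$1$1 * t powi n)) \<in> S"
  (is "_ \<longleftrightarrow> ?e \<noteq> 0 \<and> _ \<and> _ \<and> ?p \<in> S")
proof
  assume "M \<in> setmult (setmult S {A_mat t n}) (Uplus E)"
  then obtain p g where p: "p \<in> S" and g: "g \<in> E" and M: "M = p ** A_mat t n ** mat2 1 g 0 1"
    unfolding setmult_def Uplus_def by blast
  have "p \<in> Pminus" using p S by blast
  then have p_eq: "p = mat2 (p$1$1) 0 (p$2$1) (p$2$2)" and ad: "p$1$1 * p$2$2 = 1"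
    using mat2_entries[of p] by (auto simp: Pminus_def det_2)
  have M_eq: "M = mat2 (p$1$1 * inverse ?e) (p$1$1 * inverse ?e * g) (p$2$1 * inverse ?e)
      (p$2$1 * inverse ?e * g + p$2$2 * ?e)"
    unfolding M by (subst p_eq) (rule lower_A_mat_upper_unipotent)
  have "p$1$1 * p$2$2 * (inverse ?e * ?e) = 1"
    using det by (simp add: M_eq det_mat2 algebra_simps)
  then have "inverse ?e * ?e = 1"
    using ad by simp
  then have e: "?e \<noteq> 0"
    by (metis mult_zero_right zero_neq_one)
  have "M$1$1 * ?e = p$1$1" "M$2$1 * ?e = p$2$1" "p$2$2 = inverse (p$1$1)"
    using M_eq e inverse_unique[OF ad] by simp_all
  then have "p = ?p"
    using p_eq by simp
  moreover have "p$1$1 \<noteq> 0"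
    using ad by auto
  ultimately show "?e \<noteq> 0 \<and> M$1$1 \<noteq> 0 \<and> M$1$2 / M$1$1 \<in> E \<and> ?p \<in> S"
    using M_eq e g p by simp
next
  assume h: "?e \<noteq> 0 \<and> M$1$1 \<noteq> 0 \<and> M$1$2 / M$1$1 \<in> E \<and> ?p \<in> S"
  have "M$1$1 * M$2$2 - M$1$2 * M$2$1 = 1"
    using det by (simp add: det_2)
  then have "?p ** A_mat t n ** mat2 1 (M$1$2 / M$1$1) 0 1 = M"
    using h unfolding lower_A_mat_upper_unipotent
    by (subst (5) mat2_entries) (simp add: mat2_eq_iff field_simps)
  moreover have "mat2 1 (M$1$2 / M$1$1) 0 1 \<in> Uplus E"
    using h by (auto simp: Uplus_def)
  ultimately show "M \<in> setmult (setmult S {A_mat t n}) (Uplus E)"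
    using h unfolding setmult_def by force
qed

lemma Pminus_Uplus_iff:
  fixes M :: "'a::field^2^2"
  assumes "det M = 1"
  shows "M \<in> setmult Pminus (Uplus E) \<longleftrightarrow> M$1$1 \<noteq> 0 \<and> M$1$2 / M$1$1 \<in> E"
proof -
  have "setmult Pminus {A_mat (1::'a) 0} = Pminus"
    by (simp add: setmult_def A_mat_def mat2_identity)
  then show ?thesis
    using mem_setmult_A_mat_Uplus_iff[of Pminus M 1 0 E] assms
    by (auto simp: Pminus_def det_mat2)
qed

lemma lower_mem_Pminus_Theta_iff:
  assumes w: "norm_dvaluation UNIV w"
  shows "mat2 a 0 c (inverse a) \<in> Pminus_Theta w \<Theta> \<longleftrightarrow>
    a \<noteq> 0 \<and> w a = 0 \<and> c \<in> valring w \<and> column 1 (mat2 a 0 c (inverse a)) \<in> \<Theta>"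
proof -
  have "det (mat2 a 0 c (inverse a)) = 1 \<longleftrightarrow> a \<noteq> 0"
    by (auto simp: det_mat2)
  then show ?thesis
    using norm_dvaluation_inverse[OF w, of a]
    by (auto simp: Pminus_Theta_def Pminus_def valring_def forall_2)
qed

lemma scaled_lower_mem_Pminus_Theta_iff:
  fixes u :: "'a::field^2"
  assumes w: "norm_dvaluation UNIV w" "qw w \<ge> 2" and t: "w t = 1" and \<Theta>: "\<Theta> \<subseteq> sphere1 w"
    and u: "absw w (u$2) \<le> absw w (u$1)" "u$1 \<noteq> 0"
  shows "t powi n \<noteq> 0 \<and>
      mat2 (u$1 * t powi n) 0 (u$2 * t powi n) (inverse (u$1 * t powi n)) \<in> Pminus_Theta w \<Theta>
    \<longleftrightarrow> w (u$1) = - n \<and> t powi n *s u \<in> \<Theta>"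
proof -
  define e where "e = t powi n"
  have column: "column 1 (mat2 (u$1 * e) 0 (u$2 * e) (inverse (u$1 * e))) = e *s u"
    by (simp add: vec_eq_iff forall_2 column_def mult.commute)
  have w_e: "w e = n" if "e \<noteq> 0"
    using norm_dvaluation_uniformizer_power_int[OF w(1) t] that by (simp add: e_def)
  have w_u1e: "w (u$1 * e) = w (u$1) + n" if "e \<noteq> 0"
    using norm_dvaluation_mult[OF w(1), of "u$1" e] u(2) that w_e by simp
  have u2e: "u$2 * e \<in> valring w" if "w (u$1) = - n"
  proof (cases "u$2 = 0 \<or> e = 0")
    case False
    then have "w (u$1) \<le> w (u$2)"
      using valuation_le_if_absw_le[OF w(2) u] by simp
    then show ?thesis
      using False that w_e norm_dvaluation_mult[OF w(1), of "u$2" e] by (simp add: valring_def)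
  qed (auto simp: valring_def)
  have e_nonzero: "e \<noteq> 0" if "e *s u \<in> \<Theta>"
  proof
    assume "e = 0"
    then have "e *s u \<notin> sphere1 w"
      by (simp add: sphere1_def normw_def absw_def)
    then show False using that \<Theta> by blast
  qed
  show ?thesis
    unfolding e_def[symmetric] lower_mem_Pminus_Theta_iff[OF w(1)] column
    using u(2) w_u1e u2e e_nonzero by auto
qed

lemma mem_Pminus_Theta_A_Uplus_iff:
  fixes M :: "'a::field^2^2"
  assumes w: "norm_dvaluation UNIV w" "qw w \<ge> 2" and t: "w t = 1" and \<Theta>: "\<Theta> \<subseteq> sphere1 w"
    and M: "det M = 1" "M$1$1 \<noteq> 0" "absw w (M$2$1) \<le> absw w (M$1$1)"
  shows "M \<in> setmult (setmult (Pminus_Theta w \<Theta>) {A_mat t n}) (Uplus E) \<longleftrightarrow>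
    normw w (column 1 M) = real (qw w) powi n \<and> vbar w t (column 1 M) \<in> \<Theta> \<and>
    M$1$2 / M$1$1 \<in> E"
proof -
  have sharp: "absw w (column 1 M $ 2) \<le> absw w (column 1 M $ 1)" "column 1 M $ 1 \<noteq> 0"
    using M by (simp_all add: column_nth)
  have "Pminus_Theta w \<Theta> \<subseteq> Pminus"
    by (auto simp: Pminus_Theta_def)
  then have "M \<in> setmult (setmult (Pminus_Theta w \<Theta>) {A_mat t n}) (Uplus E) \<longleftrightarrow>
      M$1$2 / M$1$1 \<in> E \<and> w (M$1$1) = - n \<and> t powi n *s column 1 M \<in> \<Theta>"
    using mem_setmult_A_mat_Uplus_iff[of _ M t n E] scaled_lower_mem_Pminus_Theta_iff[OF w t \<Theta> sharp]
      M(1,2) by (auto simp: column_nth)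
  also have "\<dots> \<longleftrightarrow> normw w (column 1 M) = real (qw w) powi n \<and> vbar w t (column 1 M) \<in> \<Theta> \<and>
      M$1$2 / M$1$1 \<in> E"
    using normw_eq_if_absw_le[OF sharp] vbar_eq_if_absw_le[OF w(2) sharp]
      power_int_eq_power_int_iff[of "real (qw w)" "- w (M$1$1)" n] w(2)
    by (auto simp: column_nth)
  finally show ?thesis .
qed

lemma mult_upper_unipotent:
  "(M::'a::semiring_1^2^2) ** mat2 1 r 0 1 =
     mat2 (M$1$1) (M$1$1 * r + M$1$2) (M$2$1) (M$2$1 * r + M$2$2)"
  by (subst mat2_entries) (simp add: mat2_mult)

lemma det_mult_upper_unipotent: "det ((M::'a::comm_ring_1^2^2) ** mat2 1 r 0 1) = det M"
  by (simp add: det_mul det_mat2)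

lemma mat2_eq_mult_upper_unipotent:
  fixes a :: "'a::comm_ring_1"
  assumes det: "a * d - c * b = 1" "a * d' - c' * b = 1"
  shows "mat2 a c' b d' = mat2 a c b d ** mat2 1 (d * c' - c * d') 0 1"
proof -
  have ad: "a * d = 1 + c * b" "a * d' = 1 + c' * b"
    using det by (simp_all add: algebra_simps)
  have "a * (d * c' - c * d') + c = c' * (a * d) - c * (a * d') + c"
    by (simp add: algebra_simps)
  then have upper: "a * (d * c' - c * d') + c = c'"
    unfolding ad by (simp add: algebra_simps)
  have "b * (d * c' - c * d') + d = d * (1 + c' * b) - d' * (c * b)"
    by (simp add: algebra_simps)
  also have "\<dots> = d' * (a * d - c * b)"
    unfolding ad(2)[symmetric] by (simp add: algebra_simps)
  finally have lower: "b * (d * c' - c * d') + d = d'"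
    using det(1) by simp
  show ?thesis
    using upper lower by (simp add: mat2_mult mat2_eq_iff)
qed

section \<open>First columns of \<open>\<Gamma>\<^sup>\<sharp>\<close>\<close>

lemma strict_fund_dom_translate_eq_0:
  assumes "strict_fund_dom R D" "0 \<in> R" "x \<in> D" "x + r \<in> D" "r \<in> R"
  shows "r = 0"
  using assms unfolding strict_fund_dom_def by (metis add_0_right)

lemma Gamma_sharp_Pminus_Uplus_iff:
  "M \<in> Gamma_sharp w R \<inter> setmult Pminus (Uplus D) \<longleftrightarrow>
     (\<forall>i j. M$i$j \<in> R) \<and> det M = 1 \<and> absw w (M$2$1) \<le> absw w (M$1$1) \<and>
     M$1$1 \<noteq> 0 \<and> M$1$2 / M$1$1 \<in> D"
  by (auto simp: Gamma_sharp_def SL2_over_def Pminus_Uplus_iff)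

lemma column1_mem_Rprim:
  fixes M :: "'a::field^2^2"
  assumes "subring R" and M: "\<forall>i j. M$i$j \<in> R" and det: "det M = 1"
  shows "column 1 M \<in> Rprim R"
proof -
  interpret subring R by fact
  have "z \<in> {M$1$1 * x + M$2$1 * y | x y. x \<in> R \<and> y \<in> R}" if z: "z \<in> R" for z
  proof -
    have "M$1$1 * (z * M$2$2) + M$2$1 * (- (z * M$1$2)) = z * det M"
      by (simp add: det_2 algebra_simps)
    then have "z = M$1$1 * (z * M$2$2) + M$2$1 * (- (z * M$1$2))"
      using det by simp
    then show ?thesis
      using M z by (blast intro: mult_mem uminus_mem)
  qed
  moreover have "M$1$1 \<in> R" "M$2$1 \<in> R"
    using M by simp_all
  ultimately show ?thesis
    by (auto simp: Rprim_def column_def intro!: add_mem mult_mem)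
qed

lemma Rprim_completion:
  fixes u :: "'a::field^2"
  assumes "subring R" and u: "u \<in> Rprim R"
  obtains M where "\<forall>i j. M$i$j \<in> R" "det M = 1" "column 1 M = u"
proof -
  interpret subring R by fact
  have "1 \<in> {u$1 * x + u$2 * y | x y. x \<in> R \<and> y \<in> R}"
    using u by (simp add: Rprim_def)
  then obtain x y where xy: "x \<in> R" "y \<in> R" "u$1 * x + u$2 * y = 1"
    by auto
  show ?thesis
  proof
    show "\<forall>i j. mat2 (u$1) (- y) (u$2) x $ i $ j \<in> R"
      using u xy by (simp add: forall_2 Rprim_def uminus_mem)
    show "det (mat2 (u$1) (- y) (u$2) x) = 1"
      using xy by (simp add: det_mat2 algebra_simps)
    show "column 1 (mat2 (u$1) (- y) (u$2) x) = u"
      by (simp add: vec_eq_iff forall_2 column_def)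
  qed
qed

lemma Rprim_sharp_first_nonzero:
  assumes "1 \<in> R" "0 < qw w" "u \<in> Rprim_sharp w R"
  shows "u$1 \<noteq> 0"
proof
  assume u1: "u$1 = 0"
  then have "absw w (u$2) \<le> 0"
    using assms(3) by (simp add: Rprim_sharp_def absw_def)
  moreover have "0 < real (qw w) powi (- w (u$2))"
    using assms(2) by (simp add: zero_less_power_int)
  ultimately have "u$2 = 0"
    by (auto simp: absw_def split: if_splits)
  then have "{u$1 * x + u$2 * y | x y. x \<in> R \<and> y \<in> R} = {0}"
    using u1 assms(1) by auto
  then show False
    using assms(1,3) by (auto simp: Rprim_sharp_def Rprim_def)
qed

lemma inj_on_column1_Gamma_sharp_Pminus_Uplus:
  fixes R :: "'a::field set"
  assumes "subring R" and D: "strict_fund_dom R D"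
  shows "inj_on (column 1) (Gamma_sharp w R \<inter> setmult Pminus (Uplus D))"
proof
  interpret subring R by fact
  fix M M' assume M: "M \<in> Gamma_sharp w R \<inter> setmult Pminus (Uplus D)"
    and M': "M' \<in> Gamma_sharp w R \<inter> setmult Pminus (Uplus D)" and col: "column 1 M = column 1 M'"
  define r where "r = M$2$2 * M'$1$2 - M$1$2 * M'$2$2"
  have M_props: "\<forall>i j. M$i$j \<in> R" "det M = 1" "M$1$1 \<noteq> 0" "M$1$2 / M$1$1 \<in> D"
    and M'_props: "\<forall>i j. M'$i$j \<in> R" "det M' = 1" "M'$1$2 / M'$1$1 \<in> D"
    using M M' unfolding Gamma_sharp_Pminus_Uplus_iff by simp_all
  have "M'$1$1 = M$1$1" "M'$2$1 = M$2$1"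
    using col by (auto simp: vec_eq_iff column_def)
  then have "M' = mat2 (M$1$1) (M'$1$2) (M$2$1) (M'$2$2)"
    by (metis mat2_entries)
  also have "\<dots> = mat2 (M$1$1) (M$1$2) (M$2$1) (M$2$2) ** mat2 1 r 0 1"
    unfolding r_def using M_props(2) M'_props(2) \<open>M'$1$1 = M$1$1\<close> \<open>M'$2$1 = M$2$1\<close>
    by (intro mat2_eq_mult_upper_unipotent) (simp_all add: det_2)
  finally have M'_eq: "M' = M ** mat2 1 r 0 1"
    by (simp only: mat2_entries[of M, symmetric])
  have "r \<in> R"
    using M_props M'_props by (simp add: r_def diff_mem mult_mem)
  moreover have "M'$1$2 / M'$1$1 = M$1$2 / M$1$1 + r"
    using M'_eq M_props(3) by (simp add: mult_upper_unipotent field_simps)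
  then have "M$1$2 / M$1$1 + r \<in> D"
    using M'_props(3) by simp
  ultimately have "r = 0"
    using strict_fund_dom_translate_eq_0[OF D zero_mem] M_props by blast
  then show "M = M'"
    using M'_eq by (simp add: mat2_identity)
qed

lemma column1_image_Gamma_sharp_Pminus_Uplus:
  fixes R :: "'a::field set"
  assumes "subring R" and q: "0 < qw w" and D: "strict_fund_dom R D"
  shows "column 1 ` (Gamma_sharp w R \<inter> setmult Pminus (Uplus D)) = Rprim_sharp w R"
    (is "column 1 ` ?G = _")
proof (intro equalityI subsetI)
  interpret subring R by fact
  fix u assume "u \<in> column 1 ` ?G"
  then obtain M where M: "M \<in> ?G" and u: "u = column 1 M" by blast
  then show "u \<in> Rprim_sharp w R"
    using column1_mem_Rprim[OF \<open>subring R\<close>, of M]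
    unfolding Gamma_sharp_Pminus_Uplus_iff by (auto simp: Rprim_sharp_def column_def)
next
  interpret subring R by fact
  fix u assume u: "u \<in> Rprim_sharp w R"
  then obtain M where M: "\<forall>i j. M$i$j \<in> R" "det M = 1" "column 1 M = u"
    by (auto simp: Rprim_sharp_def elim: Rprim_completion[OF \<open>subring R\<close>])
  have M11: "M$1$1 = u$1" "M$2$1 = u$2"
    using M(3) by (auto simp: column_def)
  have u1: "u$1 \<noteq> 0"
    using Rprim_sharp_first_nonzero[OF one_mem q u] .
  obtain r where r: "r \<in> R" "M$1$2 / M$1$1 + r \<in> D"
    using D unfolding strict_fund_dom_def by blast
  let ?M = "M ** mat2 1 r 0 1"
  have entries: "\<forall>i j. ?M$i$j \<in> R"
    using M(1) r(1) by (simp add: mult_upper_unipotent forall_2 add_mem mult_mem)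
  have det: "det ?M = 1"
    using M(2) by (simp add: det_mult_upper_unipotent)
  have column: "column 1 ?M = u"
    using M11 by (simp add: mult_upper_unipotent vec_eq_iff forall_2 column_def)
  have "?M$1$2 / ?M$1$1 = M$1$2 / M$1$1 + r"
    using M11 u1 by (simp add: mult_upper_unipotent field_simps)
  then have "?M \<in> ?G"
    unfolding Gamma_sharp_Pminus_Uplus_iff
    using entries det M11 u u1 r(2) by (simp add: mult_upper_unipotent Rprim_sharp_def)
  then show "u \<in> column 1 ` ?G"
    using column by force
qed

lemma mem_Gamma0_Pminus_Theta_A_Uplus_iff:
  assumes w: "norm_dvaluation UNIV w" "qw w \<ge> 2" and t: "w t = 1" and \<Theta>: "\<Theta> \<subseteq> sphere1 w"
    and M: "M \<in> Gamma_sharp w R \<inter> setmult Pminus (Uplus D)" and u: "column 1 M = u"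
  shows "(normw w u = real (qw w) powi n \<and> u$2 \<in> I \<and> vbar w t u \<in> \<Theta> \<and>
      column 2 M $ 1 / u$1 \<in> E) \<longleftrightarrow>
    (M \<in> Gamma0 R I \<and> M \<in> setmult (setmult (Pminus_Theta w \<Theta>) {A_mat t n}) (Uplus E))"
proof -
  have "M$1$1 = u$1" "M$2$1 = u$2"
    using u by (auto simp: column_def)
  then show ?thesis
    using M mem_Pminus_Theta_A_Uplus_iff[OF w t \<Theta>, of M n E]
    unfolding u Gamma_sharp_Pminus_Uplus_iff by (auto simp: Gamma0_def SL2_over_def column_def)
qed

theorem proposition3p1:
  fixes F K :: "'a::field set" and w :: "'a \<Rightarrow> int" and unif :: 'a and D :: "'a set"
  assumes "global_function_field F K"
    and "place F K w"
    and "is_completion K w"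
    and "finite (residue_field w)"
    and "w unif = 1"
    and "strict_fund_dom (R_omega F K w) D"
  shows "\<exists>f. bij_betw f (Rprim_sharp w (R_omega F K w))
                (Gamma_sharp w (R_omega F K w) \<inter> setmult Pminus (Uplus D))
           \<and> (\<forall>u \<in> Rprim_sharp w (R_omega F K w).
                 column 1 (f u) = u \<and> (\<forall>i. column 2 (f u) $ i \<in> R_omega F K w))
           \<and> (\<forall>n::int. \<forall>\<Theta> D' I. \<Theta> \<subseteq> sphere1 w \<longrightarrow> D' \<subseteq> D \<longrightarrow>
                 nonzero_ideal (R_omega F K w) I \<longrightarrow>
                 (\<forall>u \<in> Rprim_sharp w (R_omega F K w).
                    (normw w u = real (qw w) powi n \<and> u$2 \<in> I \<and> vbar w unif u \<in> \<Theta>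
                       \<and> (column 2 (f u))$1 / u$1 \<in> D')
                    \<longleftrightarrow>
                    (f u \<in> Gamma0 (R_omega F K w) I \<and>
                     f u \<in> setmult (setmult (Pminus_Theta w \<Theta>) {A_mat unif n}) (Uplus D'))))"
proof -
  define R where "R = R_omega F K w"
  define G where "G = Gamma_sharp w R \<inter> setmult Pminus (Uplus D)"
  have w: "norm_dvaluation UNIV w"
    using assms(3) by (simp add: is_completion_def)
  have q: "qw w \<ge> 2"
    using qw_ge_2[OF w assms(4)] .
  have "subring R"
    using assms(1) by (simp add: R_def subring_R_omega global_function_field_def)
  then have bij: "bij_betw (column 1) G (Rprim_sharp w R)"
    unfolding G_def bij_betw_def using assms(6) q
    by (simp add: R_def inj_on_column1_Gamma_sharp_Pminus_Uplus column1_image_Gamma_sharp_Pminus_Uplus)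
  define f where "f = inv_into G (column 1)"
  have f_bij: "bij_betw f (Rprim_sharp w R) G"
    unfolding f_def by (rule bij_betw_inv_into[OF bij])
  have f_column1: "column 1 (f u) = u" and f_mem: "f u \<in> G" if "u \<in> Rprim_sharp w R" for u
    using bij_betw_inv_into_right[OF bij that] bij_betw_apply[OF f_bij that] by (simp_all add: f_def)
  show ?thesis
    unfolding R_def[symmetric]
    by (intro exI[of _ f] conjI ballI allI impI mem_Gamma0_Pminus_Theta_A_Uplus_iff[OF w q assms(5)])
      (use f_bij f_column1 f_mem in \<open>auto simp: G_def Gamma_sharp_def SL2_over_def column_def\<close>)
qed

end
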